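(* For every nonnegative integer $r$, $$\sum_{n=1}^{\infty}\frac{n}{(2n+2r+3)(2n-1)^2(2n+1)(2n+3)}\frac{\binom{2n}{n}}{\binom{2n+2r+2}{n+r+1}}=\frac{1}{2^{2r+2}}\left(\frac{8\wp(2r+4)-8\wp(2r+2)+3\wp(2r)}{128}+\frac{6}{128(4+2r)}-\frac{3}{128(2+2r)}\right),$$ where $\wp(q)=\int_0^{\pi/2} z\sin^q z\,\mathrm{d}z$. *)

theory Defs
  imports "HOL-Analysis.Analysis"
begin

definition wp :: "nat \<Rightarrow> real" where
  "wp q = integral {0..pi/2} (\<lambda>z. z * sin z ^ q)"

end

theory Submission
  imports Defs "HOL-Real_Asymp.Real_Asymp"
begin

(* Write t(r,n) for the summand (it vanishes at n = 0, so the series may start there) and S(r) for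
   its sum. Creative telescoping gives a first-order recurrence in r:
     8(r+3)(3r^2+5r+4) t(r+1,n) - (2r+1)(3r^2+11r+12) t(r,n) = G(r,n+1) - G(r,n),
   where G(r,n) = y(r,n) t(r,n) with y rational (Gosper's certificate), G(r,0) = 0 and
   G(r,n) -> 1/(2(r+3) 4^(r+1)); summing over n, S(r) satisfies this recurrence with that
   inhomogeneity. For r = 0 the summand is rational in n, and partial fractions reduce S(0) to the
   sum of the odd reciprocal squares, giving pi^2/2048. On the other side, integration by parts
   gives (q+2) wp(q+2) = (q+1) wp(q) + 1/(q+2), which turns the right-hand side into an affine
   function of wp(2r) obeying the same recurrence and initial value. *)

lemma has_integral_wp: "((\<lambda>z. z * sin z ^ q) has_integral wp q) {0..pi/2}"
  unfolding wp_def
  by (intro integrable_integral integrable_continuous_interval continuous_intros)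

lemma wp_0: "wp 0 = pi\<^sup>2 / 8"
  unfolding wp_def by (simp add: power_divide)

lemma wp_Suc_Suc: "real (q + 2) * wp (q + 2) = real (q + 1) * wp q + 1 / real (q + 2)"
proof -
  define F where "F z = sin z ^ (q + 2) / real (q + 2) - z * sin z ^ (q + 1) * cos z" for z
  define f where "f z = real (q + 2) * (z * sin z ^ (q + 2)) - real (q + 1) * (z * sin z ^ q)" for z
  have "(F has_real_derivative f z) (at z)" for z
  proof -
    have "((\<lambda>z. sin z ^ (q + 2)) has_real_derivative real (q + 2) * sin z ^ (q + 1) * cos z) (at z)"
      by (rule derivative_eq_intros refl | simp)+
    moreover have "((\<lambda>z. z * sin z ^ (q + 1) * cos z) has_real_derivative
        sin z ^ (q + 1) * cos z + z * (real (q + 1) * sin z ^ q * (cos z)\<^sup>2 - sin z ^ (q + 2))) (at z)"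
      by (rule derivative_eq_intros refl | simp add: algebra_simps power2_eq_square)+
    ultimately have deriv: "(F has_real_derivative real (q + 2) * sin z ^ (q + 1) * cos z / real (q + 2)
        - (sin z ^ (q + 1) * cos z + z * (real (q + 1) * sin z ^ q * (cos z)\<^sup>2 - sin z ^ (q + 2)))) (at z)"
        (is "(F has_real_derivative ?D) _")
      unfolding F_def by (intro DERIV_diff DERIV_cdivide)
    have "?D = z * (real (q + 1) * sin z ^ q * ((sin z)\<^sup>2 - 1) + sin z ^ (q + 2))"
      by (simp add: cos_squared_eq field_simps)
    also have "\<dots> = f z"
      unfolding f_def power_add by (simp add: algebra_simps)
    finally show ?thesis
      by (rule DERIV_cong[OF deriv])
  qed
  then have "(f has_integral F (pi/2) - F 0) {0..pi/2}"
    by (intro fundamental_theorem_of_calculus)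
      (auto simp: has_real_derivative_iff_has_vector_derivative[symmetric]
        intro: has_field_derivative_at_within)
  moreover have "(f has_integral real (q + 2) * wp (q + 2) - real (q + 1) * wp q) {0..pi/2}"
    unfolding f_def by (intro has_integral_diff has_integral_mult_right has_integral_wp)
  moreover have "F (pi/2) - F 0 = 1 / real (q + 2)"
    unfolding F_def by simp
  ultimately have "real (q + 2) * wp (q + 2) - real (q + 1) * wp q = 1 / real (q + 2)"
    using has_integral_unique by metis
  then show ?thesis
    by (simp add: algebra_simps)
qed

definition central_binom :: "nat \<Rightarrow> real" where
  "central_binom k = real ((2 * k) choose k)"

lemma central_binom_nonzero [simp]: "central_binom k \<noteq> 0"
  unfolding central_binom_def by simp

lemma central_binom_Suc:
  "central_binom (Suc k) = 2 * (2 * real k + 1) / (real k + 1) * central_binom k"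
proof -
  have "Suc k * (Suc (2 * k + 1) choose Suc k) = Suc (2 * k + 1) * ((2 * k + 1) choose k)"
    by (rule Suc_times_binomial)
  moreover have "Suc (2 * k) * ((2 * k) choose k) = (Suc (2 * k) choose Suc k) * Suc k"
    by (rule Suc_times_binomial_eq)
  moreover have "(2 * k + 1) choose k = (2 * k + 1) choose (k + 1)"
    using binomial_symmetric[of k "2 * k + 1"] by simp
  ultimately have "(k + 1) * ((2 * k + 2) choose (k + 1)) = 2 * (2 * k + 1) * ((2 * k) choose k)"
    by (simp add: algebra_simps)
  then have "real ((k + 1) * ((2 * k + 2) choose (k + 1))) = real (2 * (2 * k + 1) * ((2 * k) choose k))"
    by (rule arg_cong)
  then have "(real k + 1) * central_binom (Suc k) = 2 * (2 * real k + 1) * central_binom k"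
    unfolding central_binom_def by (simp add: algebra_simps)
  then show ?thesis
    by (simp add: field_simps)
qed

definition binom_ratio :: "nat \<Rightarrow> nat \<Rightarrow> real" where
  "binom_ratio r n = central_binom n / central_binom (n + r + 1)"

lemma binom_ratio_0: "binom_ratio 0 n = (real n + 1) / (2 * (2 * real n + 1))"
  by (simp add: binom_ratio_def central_binom_Suc)

lemma binom_ratio_Suc_left:
  "binom_ratio (Suc r) n = binom_ratio r n * (real n + real r + 2) / (2 * (2 * real n + 2 * real r + 3))"
proof -
  have shift: "central_binom (n + Suc r + 1)
      = 2 * (2 * real n + 2 * real r + 3) / (real n + real r + 2) * central_binom (n + r + 1)"
    using central_binom_Suc[of "n + r + 1"] by (simp add: algebra_simps)
  then show ?thesis
    unfolding binom_ratio_def shift by (simp add: field_simps)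
qed

lemma binom_ratio_Suc_right:
  "binom_ratio r (Suc n) = binom_ratio r n * ((2 * real n + 1) * (real n + real r + 2))
     / ((real n + 1) * (2 * real n + 2 * real r + 3))"
proof -
  have shift: "central_binom (Suc n + r + 1)
      = 2 * (2 * real n + 2 * real r + 3) / (real n + real r + 2) * central_binom (n + r + 1)"
    using central_binom_Suc[of "n + r + 1"] by (simp add: algebra_simps)
  have "real n + 1 \<noteq> 0" "real n + real r + 2 \<noteq> 0" "2 * real n + 2 * real r + 3 \<noteq> 0"
    by linarith+
  then show ?thesis
    unfolding binom_ratio_def shift central_binom_Suc[of n]
    by (simp add: divide_simps) (simp add: algebra_simps)
qed

lemma tendsto_binom_ratio: "binom_ratio r \<longlonglongrightarrow> 1 / 4 ^ Suc r"
proof (induction r)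
  case 0
  have "(\<lambda>n. (real n + 1) / (2 * (2 * real n + 1))) \<longlonglongrightarrow> 1 / 4 ^ Suc 0"
    by real_asymp
  then show ?case
    by (simp add: binom_ratio_0)
next
  case (Suc r)
  have "(\<lambda>n. (real n + real r + 2) / (2 * (2 * real n + 2 * real r + 3))) \<longlonglongrightarrow> 1 / 4"
    by real_asymp
  with Suc.IH have "(\<lambda>n. binom_ratio r n * ((real n + real r + 2) / (2 * (2 * real n + 2 * real r + 3))))
      \<longlonglongrightarrow> 1 / 4 ^ Suc r * (1 / 4)"
    by (rule tendsto_mult)
  then show ?case
    by (simp add: binom_ratio_Suc_left)
qed

definition series_value :: "nat \<Rightarrow> real" where
  "series_value r = ((3 * (real r)\<^sup>2 + 5 * real r + 4) * wp (2 * r)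
     + real r * (real r + 3) * (3 * real r + 4) / (2 * (real r + 1) * (real r + 2)))
     / (128 * (real r + 1) * (real r + 2) * 4 ^ Suc r)"

lemma series_value_0: "series_value 0 = pi\<^sup>2 / 2048"
  by (simp add: series_value_def wp_0)

lemma series_value_eq:
  "1 / 2 ^ (2 * r + 2) * ((8 * wp (2 * r + 4) - 8 * wp (2 * r + 2) + 3 * wp (2 * r)) / 128
     + 6 / (128 * (4 + 2 * real r)) - 3 / (128 * (2 + 2 * real r))) = series_value r"
proof -
  have nz: "real r + 1 \<noteq> 0" "real r + 2 \<noteq> 0"
    by linarith+
  have w2: "wp (2 * r + 2) = ((2 * real r + 1) * wp (2 * r) + 1 / (2 * real r + 2)) / (2 * real r + 2)"
    using wp_Suc_Suc[of "2 * r"] nz by (simp add: eq_divide_eq algebra_simps)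
  have w4: "wp (2 * r + 2 + 2)
      = ((2 * real r + 3) * wp (2 * r + 2) + 1 / (2 * real r + 4)) / (2 * real r + 4)"
    using wp_Suc_Suc[of "2 * r + 2"] nz by (simp add: eq_divide_eq algebra_simps)
  have index: "2 * r + 4 = 2 * r + 2 + 2"
    by simp
  have four_power: "(2::real) ^ (2 * r + 2) = 4 ^ Suc r"
    by (simp add: power_mult)
  from nz show ?thesis
    unfolding series_value_def index w4 w2 four_power
    by (simp add: divide_simps) (simp add: algebra_simps power2_eq_square power3_eq_cube)
qed

lemma series_value_Suc:
  "8 * (real r + 3) * (3 * (real r)\<^sup>2 + 5 * real r + 4) * series_value (Suc r)
     = (2 * real r + 1) * (3 * (real r)\<^sup>2 + 11 * real r + 12) * series_value r
       + 1 / (2 * (real r + 3) * 4 ^ Suc r)"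
proof -
  have nz: "real r + 1 \<noteq> 0" "real r + 2 \<noteq> 0" "real r + 3 \<noteq> 0"
    by linarith+
  have w2: "wp (2 * Suc r) = ((2 * real r + 1) * wp (2 * r) + 1 / (2 * real r + 2)) / (2 * real r + 2)"
    using wp_Suc_Suc[of "2 * r"] nz by (simp add: eq_divide_eq algebra_simps)
  from nz show ?thesis
    unfolding series_value_def w2
    by (simp add: divide_simps) (simp add: algebra_simps power2_eq_square power3_eq_cube)
qed

lemma two_times_real_neq_one: "2 * real n \<noteq> 1"
proof
  assume "2 * real n = 1"
  then have "real (2 * n) = real 1"
    by simp
  then show False
    by (simp only: of_nat_eq_iff) presburger
qed

definition summand :: "nat \<Rightarrow> nat \<Rightarrow> real" where
  "summand r n = real n
     / ((2 * real n + 2 * real r + 3) * (2 * real n - 1)\<^sup>2 * (2 * real n + 1) * (2 * real n + 3))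
     * binom_ratio r n"

lemma summand_at_0 [simp]: "summand r 0 = 0"
  by (simp add: summand_def)

lemma sums_inverse_odd_squares: "(\<lambda>n. 1 / (2 * real n + 1)\<^sup>2) sums (pi\<^sup>2 / 8)"
proof -
  have "(\<lambda>n. 1 / (real n + 1)\<^sup>2) sums (pi\<^sup>2 / 6)"
    using inverse_squares_sums by (simp add: add.commute)
  then have "(\<lambda>n. (\<Sum>k\<in>{n * 2..<n * 2 + 2}. 1 / (real k + 1)\<^sup>2) - 1 / 4 * (1 / (real n + 1)\<^sup>2))
      sums (pi\<^sup>2 / 6 - 1 / 4 * (pi\<^sup>2 / 6))"
    by (intro sums_diff sums_group sums_mult) simp_all
  moreover have "(\<Sum>k\<in>{n * 2..<n * 2 + 2}. 1 / (real k + 1)\<^sup>2) - 1 / 4 * (1 / (real n + 1)\<^sup>2)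
      = 1 / (2 * real n + 1)\<^sup>2" for n
  proof -
    have "{n * 2..<n * 2 + 2} = {2 * n, 2 * n + 1}"
      by auto
    moreover have "1 / (2 * real n + 2)\<^sup>2 = 1 / 4 * (1 / (real n + 1)\<^sup>2)"
      by (simp add: power2_eq_square field_simps)
    ultimately show ?thesis
      by (simp add: algebra_simps)
  qed
  ultimately show ?thesis
    by simp
qed

lemma summand_0_sums: "summand 0 sums (pi\<^sup>2 / 2048)"
proof -
  define H where "H n = 3 / 512 * (1 / (2 * real n + 1)\<^sup>2 - 1 / (2 * real n - 1)\<^sup>2)
    + 1 / 1024 * (1 / (2 * real n + 1) + 1 / (2 * real n - 1))" for n
  have decomp: "summand 0 n = 1 / 256 * (1 / (2 * real n + 1)\<^sup>2) + (H (Suc n) - H n)" for n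
  proof -
    have "2 * real n - 1 \<noteq> 0" "2 * real n + 1 \<noteq> 0" "2 * real n + 3 \<noteq> 0" "real n + 1 \<noteq> 0"
      using two_times_real_neq_one[of n] by linarith+
    then show ?thesis
      unfolding summand_def H_def binom_ratio_0
      by (simp add: divide_simps) (simp add: algebra_simps power2_eq_square)
  qed
  have "(\<lambda>n. 1 / 256 * (1 / (2 * real n + 1)\<^sup>2) + (H (Suc n) - H n))
      sums (1 / 256 * (pi\<^sup>2 / 8) + (0 - H 0))"
    by (intro sums_add sums_mult sums_inverse_odd_squares telescope_sums) (unfold H_def, real_asymp)
  also have "1 / 256 * (pi\<^sup>2 / 8) + (0 - H 0) = pi\<^sup>2 / 2048"
    by (simp add: H_def)
  finally show ?thesis
    unfolding decomp[symmetric] .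
qed

definition certificate_factor :: "real \<Rightarrow> real \<Rightarrow> real" where
  "certificate_factor R N = (16 * N ^ 4 + 8 * (R + 4) * N ^ 3 - 2 * (R\<^sup>2 - R + 2) * N\<^sup>2
     - (R\<^sup>2 + 13 * R + 32) * N + 3 * R\<^sup>2 + 3 * R - 12) / (R + 3)"

definition certificate :: "nat \<Rightarrow> nat \<Rightarrow> real" where
  "certificate r n = certificate_factor (real r) (real n) * summand r n"

lemma summand_recurrence_telescopes:
  "8 * (real r + 3) * (3 * (real r)\<^sup>2 + 5 * real r + 4) * summand (Suc r) n
     - (2 * real r + 1) * (3 * (real r)\<^sup>2 + 11 * real r + 12) * summand r n
   = certificate r (Suc n) - certificate r n"
proof -
  have "2 * real n - 1 \<noteq> 0" "2 * real n + 1 \<noteq> 0" "2 * real n + 3 \<noteq> 0" "2 * real n + 5 \<noteq> 0"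
    "2 * real n + 2 * real r + 3 \<noteq> 0" "2 * real n + 2 * real r + 5 \<noteq> 0" "real n + 1 \<noteq> 0" "real r + 3 \<noteq> 0"
    using two_times_real_neq_one[of n] by linarith+
  then show ?thesis
    unfolding certificate_def certificate_factor_def summand_def
      binom_ratio_Suc_left binom_ratio_Suc_right of_nat_Suc
    by (simp add: divide_simps) (simp add: algebra_simps power2_eq_square power3_eq_cube power4_eq_xxxx)
qed

lemma tendsto_certificate: "certificate r \<longlonglongrightarrow> 1 / (2 * (real r + 3) * 4 ^ Suc r)"
proof -
  have "(\<lambda>n. certificate_factor (real r) (real n) * (real n
      / ((2 * real n + 2 * real r + 3) * (2 * real n - 1)\<^sup>2 * (2 * real n + 1) * (2 * real n + 3))))
      \<longlonglongrightarrow> 1 / (2 * (real r + 3))"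
    unfolding certificate_factor_def by real_asymp (simp add: field_simps)
  from tendsto_mult[OF this tendsto_binom_ratio[of r]]
  have "certificate r \<longlonglongrightarrow> 1 / (2 * (real r + 3)) * (1 / 4 ^ Suc r)"
    unfolding certificate_def summand_def by (simp only: mult.assoc)
  then show ?thesis
    by simp
qed

lemma summand_recurrence_sums:
  "(\<lambda>n. 8 * (real r + 3) * (3 * (real r)\<^sup>2 + 5 * real r + 4) * summand (Suc r) n
     - (2 * real r + 1) * (3 * (real r)\<^sup>2 + 11 * real r + 12) * summand r n)
   sums (1 / (2 * (real r + 3) * 4 ^ Suc r))"
  unfolding summand_recurrence_telescopes
  using telescope_sums[OF tendsto_certificate, of r] by (simp add: certificate_def)

lemma summand_sums: "summand r sums series_value r"
proof (induction r)
  case 0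
  show ?case
    using summand_0_sums by (simp add: series_value_0)
next
  case (Suc r)
  let ?c0 = "8 * (real r + 3) * (3 * (real r)\<^sup>2 + 5 * real r + 4)"
  let ?c1 = "(2 * real r + 1) * (3 * (real r)\<^sup>2 + 11 * real r + 12)"
  have "(\<lambda>n. ?c1 * summand r n + (?c0 * summand (Suc r) n - ?c1 * summand r n))
      sums (?c1 * series_value r + 1 / (2 * (real r + 3) * 4 ^ Suc r))"
    by (intro sums_add summand_recurrence_sums sums_mult Suc.IH)
  then have "(\<lambda>n. ?c0 * summand (Suc r) n) sums (?c0 * series_value (Suc r))"
    unfolding series_value_Suc by simp
  moreover have "3 * (real r)\<^sup>2 + 5 * real r + 4 > 0"
    using zero_le_power2[of "real r"] of_nat_0_le_iff[of r] by linarith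
  then have "?c0 \<noteq> 0"
    by simp
  ultimately show ?case
    by (simp add: sums_mult_iff)
qed

theorem theorem5p0p2:
  fixes r :: nat
  shows "(\<lambda>m. let n = Suc m in
            real n / ((2*real n + 2*real r + 3) * (2*real n - 1)^2 * (2*real n + 1) * (2*real n + 3))
            * (real ((2*n) choose n) / real ((2*n + 2*r + 2) choose (n + r + 1))))
         sums (1 / 2^(2*r+2) * ((8 * wp (2*r+4) - 8 * wp (2*r+2) + 3 * wp (2*r)) / 128
                 + 6 / (128 * (4 + 2*real r)) - 3 / (128 * (2 + 2*real r))))"
proof -
  have "(\<lambda>m. summand r (Suc m)) sums series_value r"
    using summand_sums[of r] by (simp add: sums_Suc_iff)
  moreover have "2 * (n + r + 1) = 2 * n + 2 * r + 2" for n
    by simp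
  ultimately show ?thesis
    by (simp only: Let_def summand_def binom_ratio_def central_binom_def series_value_eq)
qed

end
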